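(* Let $(\mathcal{P},d)$ be a 1-2-metric and $\alpha>0$. Every strategy profile that is a Greedy Equilibrium of the greedy-routing network creation game on $(\mathcal{P},d)$ with edge price $\alpha$ yields a network $G(\mathbf{s})$ that is a Domination Set Graph.
   Context: A 1-2-metric is a finite metric space $(\mathcal{P},d)$ with $d(u,v)\in\{1,2\}$ for all distinct $u,v$; arcs of length 1 (resp. 2) are called 1-edges (resp. 2-edges). Game: the agents are the points of $\mathcal{P}$. A strategy of agent $u$ is $S_u\subseteq\mathcal{P}\setminus\{u\}$; a profile $\mathbf{s}=(S_u)_u$ defines the directed network $G(\mathbf{s})$ on $\mathcal{P}$ with arcs $(u,v)$, $v\in S_u$, of length $d(u,v)$. A greedy path from $u$ to $v$ is a directed path $u=x_1,\dots,x_j=v$ of arcs with $d(x_i,v)>d(x_{i+1},v)$ for all $i$. $\mathrm{stretch}(u,v)$ is the minimum length of a greedy path from $u$ to $v$ divided by $d(u,v)$, or a fixed sufficiently large penalty constant $Z$ if no greedy path exists. The cost of $u$ is $c_u(\mathbf{s})=\sum_{v\ne u}\mathrm{stretch}_{G(\mathbf{s})}(u,v)+\alpha|S_u|$. A profile is a Greedy Equilibrium (GE) if no agent $u$ can strictly decrease $c_u$ by changing $S_u$ through adding one element, deleting one element, or replacing one element by another one (swap), with all other strategies fixed. Notation for a directed network $G$ on $\mathcal{P}$ and node $u$: $N(u)$ is the set of out-neighbours of $u$; $W_1(u)=\{v\in N(u):d(u,v)=1\}$; $W_2(u)=\{v\in N(u):d(u,v)=2\}$; $W_{1\to1}(u)$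 is the set of nodes $w\ne u$ such that there is $v$ with $d(u,v)=d(v,w)=1$ and $(u,v),(v,w)$ arcs of $G$; $W_2^+(u)=W_2(u)\cap W_{1\to1}(u)$. $G^1_{-u}$ is the directed graph on $\mathcal{P}\setminus\{u\}$ having arc $(v,w)$ for every pair with $d(v,w)=1$. A set $D$ of vertices of a directed graph $H$ is dominating if every vertex of $H$ not in $D$ has an in-neighbour in $D$. A Domination Set Graph (DSG) is a directed network $G$ on $\mathcal{P}$ such that (i) $G$ contains every arc $(v,w)$ with $d(v,w)=1$; (ii) for every node $u$, $N(u)$ is dominating in $G^1_{-u}$; (iii) for every node $u$ there is no set $N'\subseteq\mathcal{P}\setminus\{u\}$, obtained from $N(u)$ by deleting one element or by replacing one element by another, such that $N'$ contains all $v$ with $d(u,v)=1$, $N'$ is dominating in $G^1_{-u}$, and $|\{v\in N': d(u,v)=2\}\cap W_{1\to1}(u)|<|W_2^+(u)|$. *)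

theory Defs
  imports Complex_Main
begin

definition one_two_metric :: "'a set \<Rightarrow> ('a \<Rightarrow> 'a \<Rightarrow> real) \<Rightarrow> bool" where
  "one_two_metric P d \<longleftrightarrow> finite P \<and>
     (\<forall>u\<in>P. d u u = 0) \<and>
     (\<forall>u\<in>P. \<forall>v\<in>P. d u v = d v u) \<and>
     (\<forall>u\<in>P. \<forall>v\<in>P. u \<noteq> v \<longrightarrow> d u v \<in> {1, 2})"

text \<open>A strategy profile: agent u buys arcs to S u, a subset of P without u.
  The network G(s) has the arc (u,v) iff v is in s u.\<close>
definition strategy_profile :: "'a set \<Rightarrow> ('a \<Rightarrow> 'a set) \<Rightarrow> bool" where
  "strategy_profile P s \<longleftrightarrow> (\<forall>u\<in>P. s u \<subseteq> P - {u})"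

definition greedy_path ::
  "'a set \<Rightarrow> ('a \<Rightarrow> 'a \<Rightarrow> real) \<Rightarrow> ('a \<Rightarrow> 'a set) \<Rightarrow> 'a \<Rightarrow> 'a \<Rightarrow> 'a list \<Rightarrow> bool" where
  "greedy_path P d s u v xs \<longleftrightarrow> xs \<noteq> [] \<and> hd xs = u \<and> last xs = v \<and> set xs \<subseteq> P \<and>
     (\<forall>i. i + 1 < length xs \<longrightarrow>
        xs ! (i + 1) \<in> s (xs ! i) \<and> d (xs ! i) v > d (xs ! (i + 1)) v)"

definition path_len :: "('a \<Rightarrow> 'a \<Rightarrow> real) \<Rightarrow> 'a list \<Rightarrow> real" where
  "path_len d xs = (\<Sum>i<length xs - 1. d (xs ! i) (xs ! (i + 1)))"

definition stretch ::
  "'a set \<Rightarrow> ('a \<Rightarrow> 'a \<Rightarrow> real) \<Rightarrow> real \<Rightarrow> ('a \<Rightarrow> 'a set) \<Rightarrow> 'a \<Rightarrow> 'a \<Rightarrow> real" where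
  "stretch P d Z s u v =
     (if (\<exists>xs. greedy_path P d s u v xs)
      then Min {path_len d xs | xs. greedy_path P d s u v xs} / d u v
      else Z)"

definition cost ::
  "'a set \<Rightarrow> ('a \<Rightarrow> 'a \<Rightarrow> real) \<Rightarrow> real \<Rightarrow> real \<Rightarrow> ('a \<Rightarrow> 'a set) \<Rightarrow> 'a \<Rightarrow> real" where
  "cost P d Z \<alpha> s u = (\<Sum>v\<in>P - {u}. stretch P d Z s u v) + \<alpha> * real (card (s u))"

definition single_change :: "'a set \<Rightarrow> 'a \<Rightarrow> 'a set \<Rightarrow> 'a set \<Rightarrow> bool" where
  "single_change P u S S' \<longleftrightarrow>
     (\<exists>w\<in>P - {u} - S. S' = insert w S) \<or>
     (\<exists>w\<in>S. S' = S - {w}) \<or>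
     (\<exists>w\<in>S. \<exists>w'\<in>P - {u} - S. S' = insert w' (S - {w}))"

definition greedy_equilibrium ::
  "'a set \<Rightarrow> ('a \<Rightarrow> 'a \<Rightarrow> real) \<Rightarrow> real \<Rightarrow> real \<Rightarrow> ('a \<Rightarrow> 'a set) \<Rightarrow> bool" where
  "greedy_equilibrium P d Z \<alpha> s \<longleftrightarrow> strategy_profile P s \<and>
     (\<forall>u\<in>P. \<forall>S'. single_change P u (s u) S' \<longrightarrow>
        cost P d Z \<alpha> s u \<le> cost P d Z \<alpha> (s(u := S')) u)"

definition W11 :: "'a set \<Rightarrow> ('a \<Rightarrow> 'a \<Rightarrow> real) \<Rightarrow> ('a \<Rightarrow> 'a set) \<Rightarrow> 'a \<Rightarrow> 'a set" where
  "W11 P d N u = {w\<in>P. w \<noteq> u \<and> (\<exists>v\<in>P. d u v = 1 \<and> d v w = 1 \<and> v \<in> N u \<and> w \<in> N v)}"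

definition W2 :: "('a \<Rightarrow> 'a \<Rightarrow> real) \<Rightarrow> ('a \<Rightarrow> 'a set) \<Rightarrow> 'a \<Rightarrow> 'a set" where
  "W2 d N u = {v\<in>N u. d u v = 2}"

definition W2plus :: "'a set \<Rightarrow> ('a \<Rightarrow> 'a \<Rightarrow> real) \<Rightarrow> ('a \<Rightarrow> 'a set) \<Rightarrow> 'a \<Rightarrow> 'a set" where
  "W2plus P d N u = W2 d N u \<inter> W11 P d N u"

text \<open>D is dominating in G1 minus u: the digraph on P - {u} with all 1-arcs.\<close>
definition dominating_minus :: "'a set \<Rightarrow> ('a \<Rightarrow> 'a \<Rightarrow> real) \<Rightarrow> 'a \<Rightarrow> 'a set \<Rightarrow> bool" where
  "dominating_minus P d u D \<longleftrightarrow> D \<subseteq> P - {u} \<and>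
     (\<forall>x\<in>P - {u} - D. \<exists>y\<in>D. d y x = 1)"

definition DSG :: "'a set \<Rightarrow> ('a \<Rightarrow> 'a \<Rightarrow> real) \<Rightarrow> ('a \<Rightarrow> 'a set) \<Rightarrow> bool" where
  "DSG P d N \<longleftrightarrow>
     (\<forall>v\<in>P. \<forall>w\<in>P. d v w = 1 \<longrightarrow> w \<in> N v) \<and>
     (\<forall>u\<in>P. dominating_minus P d u (N u)) \<and>
     (\<forall>u\<in>P. \<not> (\<exists>N'. N' \<subseteq> P - {u} \<and>
        ((\<exists>w\<in>N u. N' = N u - {w}) \<or>
         (\<exists>w\<in>N u. \<exists>w'\<in>P - {u} - N u. N' = insert w' (N u - {w}))) \<and>
        {v\<in>P. d u v = 1 \<and> v \<noteq> u} \<subseteq> N' \<and>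
        dominating_minus P d u N' \<and>
        card ({v\<in>N'. d u v = 2} \<inter> W11 P d N u) < card (W2plus P d N u)))"

end

theory Submission
  imports Defs
begin

text \<open>In a 1-2-metric a greedy path has at most one intermediate node, so every stretch is
  \<open>1\<close>, \<open>3/2\<close> or the penalty \<open>Z\<close>. For large \<open>Z\<close> an agent facing a penalty would buy the
  missing arc, hence in equilibrium all 1-edges are bought and every out-neighbourhood
  dominates the rest of the 1-graph. Then the cost of \<open>u\<close> is \<open>|P| - 1 + \<alpha> |N(u)|\<close> plus \<open>1/2\<close>
  for every node outside \<open>N(u) \<union> W\<^sub>1\<^sub>\<rightarrow>\<^sub>1(u)\<close>, and a deletion or swap violating the
  DSG condition strictly lowers this cost.\<close>

lemma one_two_metricD:
  assumes "one_two_metric P d"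
  shows "finite P" and "u \<in> P \<Longrightarrow> d u u = 0"
    and "u \<in> P \<Longrightarrow> v \<in> P \<Longrightarrow> u \<noteq> v \<Longrightarrow> d u v = 1 \<or> d u v = 2"
  using assms unfolding one_two_metric_def by auto

lemma path_len_singleton [simp]: "path_len d [a] = 0"
  by (simp add: path_len_def)

lemma path_len_Cons_Cons [simp]: "path_len d (a # b # xs) = d a b + path_len d (b # xs)"
  by (simp add: path_len_def sum.lessThan_Suc_shift del: sum.lessThan_Suc)

text \<open>The distances to the target strictly decrease along a greedy path and take values
  in \<open>{2, 1, 0}\<close>, so a greedy path has at most one intermediate node.\<close>
lemma greedy_path_iff:
  assumes M: "one_two_metric P d" and u: "u \<in> P" and v: "v \<in> P" and uv: "u \<noteq> v"
  shows "greedy_path P d t u v xs \<longleftrightarrow>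
    (xs = [u, v] \<and> v \<in> t u) \<or>
    (\<exists>x\<in>P. xs = [u, x, v] \<and> x \<in> t u \<and> v \<in> t x \<and> d u v = 2 \<and> d x v = 1)"
proof
  assume g: "greedy_path P d t u v xs"
  have hd: "hd xs = u" and last: "last xs = v" and sP: "set xs \<subseteq> P"
    and step: "\<And>i. i + 1 < length xs \<Longrightarrow> xs ! (i + 1) \<in> t (xs ! i) \<and> d (xs ! (i + 1)) v < d (xs ! i) v"
    using g unfolding greedy_path_def by auto
  have dist: "d x v \<in> {0, 1, 2}" if "x \<in> set xs" for x
    using that sP one_two_metricD(3)[OF M, of x v] one_two_metricD(2)[OF M v] v by (cases "x = v") auto
  obtain a ys where xs: "xs = a # ys" using g unfolding greedy_path_def by (cases xs) auto
  show "(xs = [u, v] \<and> v \<in> t u) \<or>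
    (\<exists>x\<in>P. xs = [u, x, v] \<and> x \<in> t u \<and> v \<in> t x \<and> d u v = 2 \<and> d x v = 1)"
  proof (cases ys)
    case Nil
    then show ?thesis using hd last uv xs by simp
  next
    case (Cons b zs)
    note ab = step[of 0, unfolded xs Cons, simplified]
    show ?thesis
    proof (cases zs)
      case Nil
      then show ?thesis using hd last xs Cons ab by simp
    next
      case (Cons c ws)
      note bc = step[of 1, unfolded xs \<open>ys = b # zs\<close> Cons, simplified]
      have "d c v < d b v" "d b v < d a v" using ab bc by auto
      moreover have "d a v \<in> {0, 1, 2}" "d b v \<in> {0, 1, 2}" "d c v \<in> {0, 1, 2}"
        using dist xs \<open>ys = b # zs\<close> Cons by auto
      ultimately have dab: "d a v = 2" "d b v = 1" "d c v = 0" by auto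
      have "c = v"
        using dab(3) one_two_metricD(3)[OF M, of c v] sP v xs \<open>ys = b # zs\<close> Cons by force
      have "ws = []"
      proof (rule ccontr)
        assume "ws \<noteq> []"
        then have "d (ws ! 0) v < d c v"
          using step[of 2] xs \<open>ys = b # zs\<close> Cons by (simp add: numeral_2_eq_2)
        moreover have "d (ws ! 0) v \<in> {0, 1, 2}"
          using dist \<open>ws \<noteq> []\<close> xs \<open>ys = b # zs\<close> Cons by (auto simp: hd_conv_nth[symmetric])
        ultimately show False using dab by auto
      qed
      then show ?thesis using hd dab ab bc sP xs \<open>ys = b # zs\<close> Cons \<open>c = v\<close> by auto
    qed
  qed
next
  have "d v v = 0" "d u v \<noteq> 0" using one_two_metricD[OF M] u v uv by fastforce+
  then show "greedy_path P d t u v xs"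
    if "(xs = [u, v] \<and> v \<in> t u) \<or>
      (\<exists>x\<in>P. xs = [u, x, v] \<and> x \<in> t u \<and> v \<in> t x \<and> d u v = 2 \<and> d x v = 1)"
    using that u v one_two_metricD(3)[OF M u v uv]
    by (auto simp: greedy_path_def less_Suc_eq nth_Cons split: nat.splits)
qed

lemma greedy_path_lengths:
  assumes M: "one_two_metric P d" and u: "u \<in> P" and v: "v \<in> P" and uv: "u \<noteq> v"
  shows "{path_len d xs |xs. greedy_path P d t u v xs} =
    (if v \<in> t u then {d u v} else {}) \<union>
    {d u x + 1 |x. x \<in> P \<and> x \<in> t u \<and> v \<in> t x \<and> d u v = 2 \<and> d x v = 1}"
  unfolding greedy_path_iff[OF assms] by auto (metis path_len_Cons_Cons path_len_singleton add_0_right)+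

lemma stretch_eq:
  assumes M: "one_two_metric P d" and u: "u \<in> P" and v: "v \<in> P" and uv: "u \<noteq> v"
  shows "stretch P d Z t u v =
    (if v \<in> t u then 1
     else if d u v = 2 \<and> (\<exists>y\<in>P. y \<in> t u \<and> d u y = 1 \<and> d y v = 1 \<and> v \<in> t y) then 1
     else if d u v = 2 \<and> (\<exists>y\<in>P. y \<in> t u \<and> d y v = 1 \<and> v \<in> t y) then 3/2
     else Z)"
proof -
  define L where "L = {path_len d xs |xs. greedy_path P d t u v xs}"
  have L_eq: "L = (if v \<in> t u then {d u v} else {}) \<union>
      {d u x + 1 |x. x \<in> P \<and> x \<in> t u \<and> v \<in> t x \<and> d u v = 2 \<and> d x v = 1}"
    unfolding L_def using greedy_path_lengths[OF assms] .
  have duv: "d u v = 1 \<or> d u v = 2" using one_two_metricD(3)[OF M u v uv] .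
  have dux: "d u x = 1 \<or> d u x = 2" if "x \<in> P" "d u v = 2" "d x v = 1" for x
    using one_two_metricD(3)[OF M u \<open>x \<in> P\<close>] that by fastforce
  have "finite L"
    unfolding L_eq using one_two_metricD(1)[OF M] by (auto intro: finite_image_set)
  then have stretch_L: "stretch P d Z t u v = (if L = {} then Z else Min L / d u v)"
    unfolding stretch_def L_def by auto
  consider (direct) "v \<in> t u"
    | (short) "v \<notin> t u" "d u v = 2" "\<exists>y\<in>P. y \<in> t u \<and> d u y = 1 \<and> d y v = 1 \<and> v \<in> t y"
    | (long) "v \<notin> t u" "d u v = 2" "\<not> (\<exists>y\<in>P. y \<in> t u \<and> d u y = 1 \<and> d y v = 1 \<and> v \<in> t y)"
        "\<exists>y\<in>P. y \<in> t u \<and> d y v = 1 \<and> v \<in> t y"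
    | (none) "v \<notin> t u"
        "\<not> (d u v = 2 \<and> (\<exists>y\<in>P. y \<in> t u \<and> d y v = 1 \<and> v \<in> t y))"
    by blast
  then show ?thesis
  proof cases
    case direct
    have "Min L = d u v"
      using \<open>finite L\<close> direct duv by (intro Min_eqI) (auto simp: L_eq dest: dux)
    then show ?thesis using stretch_L direct duv by (auto simp: L_eq)
  next
    case short
    have "Min L = 2"
      using \<open>finite L\<close> short by (intro Min_eqI) (auto simp: L_eq dest: dux)
    then show ?thesis using stretch_L short by (auto simp: L_eq)
  next
    case long
    then obtain y where y: "y \<in> P" "y \<in> t u" "d y v = 1" "v \<in> t y" "d u y = 2"
      using dux by fastforce
    have "Min L = 3"
      using \<open>finite L\<close> long y by (intro Min_eqI) (auto simp: L_eq, fastforce dest: dux)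
    then show ?thesis using stretch_L long by (auto simp: L_eq)
  next
    case none
    then have "L = {}" by (auto simp: L_eq)
    then show ?thesis using stretch_L none by auto
  qed
qed

lemma stretch_mono:
  assumes M: "one_two_metric P d" and u: "u \<in> P" and v: "v \<in> P" and uv: "u \<noteq> v"
    and sub: "t u \<subseteq> t' u" and other: "\<And>y. y \<noteq> u \<Longrightarrow> t' y = t y" and Z: "3/2 \<le> Z"
  shows "stretch P d Z t' u v \<le> stretch P d Z t u v"
proof -
  have y_ne_u: "y \<noteq> u" if "d y v = 1" "d u y = 1 \<or> d u v = 2" for y
    using that one_two_metricD(2)[OF M u] by auto
  have "\<exists>y\<in>P. y \<in> t' u \<and> d u y = 1 \<and> d y v = 1 \<and> v \<in> t' y"
    if "\<exists>y\<in>P. y \<in> t u \<and> d u y = 1 \<and> d y v = 1 \<and> v \<in> t y"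
    using that sub other y_ne_u by (metis subsetD)
  moreover have "\<exists>y\<in>P. y \<in> t' u \<and> d y v = 1 \<and> v \<in> t' y"
    if "d u v = 2" "\<exists>y\<in>P. y \<in> t u \<and> d y v = 1 \<and> v \<in> t y"
    using that sub other y_ne_u by (metis subsetD)
  ultimately show ?thesis
    unfolding stretch_eq[OF M u v uv] using sub Z by auto
qed

lemma greedy_equilibriumD:
  assumes "greedy_equilibrium P d Z \<alpha> s" and "u \<in> P"
  shows "s u \<subseteq> P - {u}"
    and "single_change P u (s u) S' \<Longrightarrow> cost P d Z \<alpha> s u \<le> cost P d Z \<alpha> (s(u := S')) u"
  using assms unfolding greedy_equilibrium_def strategy_profile_def by auto

text \<open>If a greedy path from \<open>u\<close> to \<open>x\<close> were missing, buying the arc \<open>(u, x)\<close> would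
  replace the penalty \<open>Z\<close> by \<open>1\<close> at price \<open>\<alpha>\<close> without increasing any other stretch.\<close>
lemma greedy_equilibrium_stretch_ne_penalty:
  assumes M: "one_two_metric P d" and GE: "greedy_equilibrium P d Z \<alpha> s"
    and Z: "3/2 \<le> Z" "1 + \<alpha> < Z"
    and u: "u \<in> P" and x: "x \<in> P" "x \<noteq> u"
  shows "stretch P d Z s u x \<noteq> Z"
proof
  assume penalty: "stretch P d Z s u x = Z"
  have "x \<notin> s u"
    using penalty stretch_eq[OF M u x(1) x(2)[symmetric], of Z s] Z by auto
  define s' where "s' = s(u := insert x (s u))"
  have change: "single_change P u (s u) (insert x (s u))"
    unfolding single_change_def using x \<open>x \<notin> s u\<close> by auto
  have "finite (s u)"
    using greedy_equilibriumD(1)[OF GE u] one_two_metricD(1)[OF M] finite_subset by blast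
  then have card: "card (s' u) = card (s u) + 1" unfolding s'_def using \<open>x \<notin> s u\<close> by simp
  have remove_x: "(\<Sum>y\<in>P - {u}. f y) = f x + (\<Sum>y\<in>P - {u} - {x}. f y)" for f :: "'a \<Rightarrow> real"
    using sum.remove[of "P - {u}" x f] one_two_metricD(1)[OF M] x by simp
  have "stretch P d Z s' u x = 1"
    unfolding s'_def stretch_eq[OF M u x(1) x(2)[symmetric]] by simp
  moreover have "(\<Sum>y\<in>P - {u} - {x}. stretch P d Z s' u y) \<le> (\<Sum>y\<in>P - {u} - {x}. stretch P d Z s u y)"
    using stretch_mono[OF M u _ _ _ _ Z(1), of _ s s'] by (intro sum_mono) (auto simp: s'_def)
  ultimately have "cost P d Z \<alpha> s' u \<le> cost P d Z \<alpha> s u + 1 - Z + \<alpha>"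
    unfolding cost_def card remove_x[of "stretch P d Z _ u"] using penalty by (simp add: algebra_simps)
  moreover have "cost P d Z \<alpha> s u \<le> cost P d Z \<alpha> s' u"
    using greedy_equilibriumD(2)[OF GE u change] unfolding s'_def .
  ultimately show False using Z by linarith
qed

lemma greedy_equilibrium_one_arcs:
  assumes M: "one_two_metric P d" and GE: "greedy_equilibrium P d Z \<alpha> s"
    and Z: "3/2 \<le> Z" "1 + \<alpha> < Z"
    and v: "v \<in> P" and w: "w \<in> P" and vw: "d v w = 1"
  shows "w \<in> s v"
proof (rule ccontr)
  assume "w \<notin> s v"
  moreover have "v \<noteq> w" using vw one_two_metricD(2)[OF M v] by auto
  ultimately have "stretch P d Z s v w = Z" using stretch_eq[OF M v w] vw by simp
  then show False using greedy_equilibrium_stretch_ne_penalty[OF M GE Z v w] \<open>v \<noteq> w\<close> by simp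
qed

lemma greedy_equilibrium_dominating:
  assumes M: "one_two_metric P d" and GE: "greedy_equilibrium P d Z \<alpha> s"
    and Z: "3/2 \<le> Z" "1 + \<alpha> < Z" and u: "u \<in> P"
  shows "dominating_minus P d u (s u)"
  unfolding dominating_minus_def
proof (intro conjI ballI)
  show "s u \<subseteq> P - {u}" using greedy_equilibriumD(1)[OF GE u] .
  fix x assume x: "x \<in> P - {u} - s u"
  show "\<exists>y\<in>s u. d y x = 1"
  proof (rule ccontr)
    assume "\<not> (\<exists>y\<in>s u. d y x = 1)"
    then have "stretch P d Z s u x = Z" using stretch_eq[OF M u, of x] x by auto
    then show False using greedy_equilibrium_stretch_ne_penalty[OF M GE Z u, of x] x by simp
  qed
qed

lemma W11_eq_two_hops:
  assumes u: "u \<in> P" and ones: "\<forall>v\<in>P. \<forall>w\<in>P. d v w = 1 \<longrightarrow> w \<in> t v"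
  shows "W11 P d t u = {w\<in>P. w \<noteq> u \<and> (\<exists>v\<in>P. d u v = 1 \<and> d v w = 1)}"
  using u ones unfolding W11_def by auto

lemma stretch_in_dominating_network:
  assumes M: "one_two_metric P d" and u: "u \<in> P" and x: "x \<in> P" "x \<noteq> u"
    and ones: "\<forall>v\<in>P. \<forall>w\<in>P. d v w = 1 \<longrightarrow> w \<in> t v" and dom: "dominating_minus P d u (t u)"
  shows "stretch P d Z t u x = (if x \<in> t u \<union> W11 P d t u then 1 else 3/2)"
proof (cases "x \<in> t u")
  case False
  then have "d u x = 2" using ones one_two_metricD(3)[OF M u x(1)] x u by fastforce
  moreover obtain y where "y \<in> t u" "d y x = 1"
    using dom False x unfolding dominating_minus_def by blast
  moreover have "t u \<subseteq> P" using dom unfolding dominating_minus_def by blast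
  ultimately show ?thesis
    unfolding stretch_eq[OF M u x(1) x(2)[symmetric]] W11_eq_two_hops[OF u ones]
    using False x u ones by auto
qed (simp add: stretch_eq[OF M u x(1) x(2)[symmetric]])

lemma cost_in_dominating_network:
  fixes \<alpha> :: real
  assumes M: "one_two_metric P d" and u: "u \<in> P"
    and ones: "\<forall>v\<in>P. \<forall>w\<in>P. d v w = 1 \<longrightarrow> w \<in> t v" and dom: "dominating_minus P d u (t u)"
  shows "cost P d Z \<alpha> t u =
    card (P - {u}) + card (P - {u} - t u - W11 P d t u) / 2 + \<alpha> * card (t u)"
proof -
  let ?D = "P - {u} - t u - W11 P d t u"
  have "stretch P d Z t u x = 1 + (if x \<in> ?D then 1/2 else 0)" if "x \<in> P - {u}" for x
    using stretch_in_dominating_network[OF M u _ _ ones dom] that by auto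
  then have "(\<Sum>x\<in>P - {u}. stretch P d Z t u x) = card (P - {u}) + (\<Sum>x\<in>P - {u}. if x \<in> ?D then 1/2 else 0)"
    by (simp add: sum.distrib)
  also have "(\<Sum>x\<in>P - {u}. if x \<in> ?D then 1/2 else 0) = card ?D / 2"
    using one_two_metricD(1)[OF M] by (simp add: sum.If_cases Int_absorb1) (rule arg_cong[where f = card], blast)
  finally show ?thesis unfolding cost_def by simp
qed

text \<open>A deletion or swap as in the definition of a DSG, which lowers \<open>|W\<^sub>2\<^sup>+(u)|\<close>, must remove a
  node of \<open>W\<^sub>1\<^sub>\<rightarrow>\<^sub>1(u)\<close> (whose stretch stays \<open>1\<close>) and, in a swap, buy a node at stretch \<open>3/2\<close>
  outside \<open>W\<^sub>1\<^sub>\<rightarrow>\<^sub>1(u)\<close>: it saves either \<open>\<alpha>\<close> or \<open>1/2\<close>.\<close>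
lemma DSG_violation_improves_cost:
  fixes \<alpha> :: real
  assumes M: "one_two_metric P d" and u: "u \<in> P" and \<alpha>: "0 < \<alpha>"
    and ones: "\<forall>v\<in>P. \<forall>w\<in>P. d v w = 1 \<longrightarrow> w \<in> s v" and dom: "dominating_minus P d u (s u)"
    and move: "(\<exists>w\<in>s u. N' = s u - {w}) \<or> (\<exists>w\<in>s u. \<exists>w'\<in>P - {u} - s u. N' = insert w' (s u - {w}))"
    and N'_ones: "{v\<in>P. d u v = 1 \<and> v \<noteq> u} \<subseteq> N'" and N'_dom: "dominating_minus P d u N'"
    and fewer: "card ({v\<in>N'. d u v = 2} \<inter> W11 P d s u) < card (W2plus P d s u)"
  shows "cost P d Z \<alpha> (s(u := N')) u < cost P d Z \<alpha> s u"
proof -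
  let ?W = "W11 P d s u" and ?A = "W2plus P d s u" and ?A' = "{v\<in>N'. d u v = 2} \<inter> W11 P d s u"
  have ones': "\<forall>v\<in>P. \<forall>w\<in>P. d v w = 1 \<longrightarrow> w \<in> (s(u := N')) v"
    using ones N'_ones one_two_metricD(2)[OF M u] by auto
  have W: "W11 P d (s(u := N')) u = ?W"
    unfolding W11_eq_two_hops[OF u ones] W11_eq_two_hops[OF u ones'] ..
  have "dominating_minus P d u ((s(u := N')) u)" using N'_dom by simp
  from cost_in_dominating_network[OF M u ones' this, of Z \<alpha>]
  have cost': "cost P d Z \<alpha> (s(u := N')) u =
      card (P - {u}) + card (P - {u} - N' - ?W) / 2 + \<alpha> * card N'"
    unfolding W fun_upd_same .
  note cost = cost_in_dominating_network[OF M u ones dom, of Z \<alpha>]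
  have A: "?A = {v\<in>s u. d u v = 2} \<inter> ?W" unfolding W2plus_def W2_def ..
  have "s u \<subseteq> P" "?A' \<subseteq> P" using dom N'_dom unfolding dominating_minus_def by auto
  then have fin: "finite (s u)" "finite ?A'" using finite_subset one_two_metricD(1)[OF M] by auto
  from move show ?thesis
  proof (elim disjE bexE)
    fix w assume w: "w \<in> s u" "N' = s u - {w}"
    have "w \<in> ?W"
    proof (rule ccontr)
      assume "w \<notin> ?W"
      then have "?A' = ?A" unfolding A w(2) by auto
      then show False using fewer by simp
    qed
    then have "P - {u} - N' - ?W = P - {u} - s u - ?W" using w by auto
    moreover have "card N' < card (s u)" using card_Diff1_less[OF fin(1) w(1)] w(2) by simp
    ultimately show ?thesis using cost cost' \<alpha> by simp
  next
    fix w w' assume w: "w \<in> s u" "w' \<in> P - {u} - s u" "N' = insert w' (s u - {w})"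
    have "d u w' = 2"
      using ones one_two_metricD(3)[OF M u, of w'] w(2) u by fastforce
    have "w \<in> ?W"
    proof (rule ccontr)
      assume "w \<notin> ?W"
      then have "?A \<subseteq> ?A'" unfolding A w(3) by auto
      then show False using card_mono[OF fin(2)] fewer by (meson leD)
    qed
    have "w' \<notin> ?W"
    proof
      assume "w' \<in> ?W"
      then have "insert w' (?A - {w}) \<subseteq> ?A'" using \<open>d u w' = 2\<close> unfolding A w(3) by auto
      moreover have "card ?A \<le> card (insert w' (?A - {w}))"
      proof -
        have "finite ?A" "w' \<notin> ?A" using fin(1) w(2) unfolding A by auto
        then show ?thesis by (cases "w \<in> ?A") (simp_all add: card_Suc_Diff1)
      qed
      ultimately show False using card_mono[OF fin(2)] fewer by (meson le_trans leD)
    qed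
    have "P - {u} - N' - ?W = (P - {u} - s u - ?W) - {w'}" using w \<open>w \<in> ?W\<close> by auto
    moreover have "card (P - {u} - s u - ?W - {w'}) < card (P - {u} - s u - ?W)"
      using w \<open>w' \<notin> ?W\<close> one_two_metricD(1)[OF M] by (intro card_Diff1_less) auto
    moreover have "card N' = card (s u)"
      using w fin(1) card_gt_0_iff[of "s u"] by (auto simp: card_insert_disjoint)
    ultimately show ?thesis using cost cost' by simp
  qed
qed

lemma greedy_equilibrium_W2plus_minimal:
  assumes M: "one_two_metric P d" and \<alpha>: "0 < \<alpha>" and GE: "greedy_equilibrium P d Z \<alpha> s"
    and Z: "3/2 \<le> Z" "1 + \<alpha> < Z" and u: "u \<in> P"
  shows "\<not> (\<exists>N'. N' \<subseteq> P - {u} \<and>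
      ((\<exists>w\<in>s u. N' = s u - {w}) \<or> (\<exists>w\<in>s u. \<exists>w'\<in>P - {u} - s u. N' = insert w' (s u - {w}))) \<and>
      {v\<in>P. d u v = 1 \<and> v \<noteq> u} \<subseteq> N' \<and> dominating_minus P d u N' \<and>
      card ({v\<in>N'. d u v = 2} \<inter> W11 P d s u) < card (W2plus P d s u))"
proof
  assume "\<exists>N'. N' \<subseteq> P - {u} \<and>
      ((\<exists>w\<in>s u. N' = s u - {w}) \<or> (\<exists>w\<in>s u. \<exists>w'\<in>P - {u} - s u. N' = insert w' (s u - {w}))) \<and>
      {v\<in>P. d u v = 1 \<and> v \<noteq> u} \<subseteq> N' \<and> dominating_minus P d u N' \<and>
      card ({v\<in>N'. d u v = 2} \<inter> W11 P d s u) < card (W2plus P d s u)"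
  then obtain N' where
    move: "(\<exists>w\<in>s u. N' = s u - {w}) \<or> (\<exists>w\<in>s u. \<exists>w'\<in>P - {u} - s u. N' = insert w' (s u - {w}))"
    and N': "{v\<in>P. d u v = 1 \<and> v \<noteq> u} \<subseteq> N'" "dominating_minus P d u N'"
      "card ({v\<in>N'. d u v = 2} \<inter> W11 P d s u) < card (W2plus P d s u)"
    by blast
  have "\<forall>v\<in>P. \<forall>w\<in>P. d v w = 1 \<longrightarrow> w \<in> s v"
    using greedy_equilibrium_one_arcs[OF M GE Z] by blast
  from DSG_violation_improves_cost[OF M u \<alpha> this greedy_equilibrium_dominating[OF M GE Z u] move N']
  have "cost P d Z \<alpha> (s(u := N')) u < cost P d Z \<alpha> s u" .
  moreover have "single_change P u (s u) N'" unfolding single_change_def using move by blast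
  ultimately show False using greedy_equilibriumD(2)[OF GE u] by fastforce
qed

theorem lemma2p5:
  fixes P :: "'a set" and d :: "'a \<Rightarrow> 'a \<Rightarrow> real" and \<alpha> :: real
  assumes "one_two_metric P d" and "\<alpha> > 0"
  shows "\<exists>Z0. \<forall>Z \<ge> Z0. \<forall>s. greedy_equilibrium P d Z \<alpha> s \<longrightarrow> DSG P d s"
proof (intro exI[of _ "2 + \<alpha>"] allI impI)
  fix Z s assume "Z \<ge> 2 + \<alpha>" and GE: "greedy_equilibrium P d Z \<alpha> s"
  then have Z: "3/2 \<le> Z" "1 + \<alpha> < Z" using \<open>\<alpha> > 0\<close> by auto
  show "DSG P d s"
    unfolding DSG_def
  proof (intro conjI ballI impI)
    show "w \<in> s v" if "v \<in> P" "w \<in> P" "d v w = 1" for v w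
      using greedy_equilibrium_one_arcs[OF assms(1) GE Z that] .
    show "dominating_minus P d u (s u)" if "u \<in> P" for u
      using greedy_equilibrium_dominating[OF assms(1) GE Z that] .
  qed (rule greedy_equilibrium_W2plus_minimal[OF assms GE Z])
qed

end
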